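(* Let $k \geq 2$ be an integer. If $c$ is a rational number such that $\mathcal{G}[\{K_{1,k}\}, c]$ is finite and $\mathcal{G}(\{K_{1,k}\}, c)^*$ is infinite (that is, $c = c(K_{1,k})$ exists), then \[c \geq \frac{2}{2k+3}.\]
   Context: Graphs are finite and simple. For $D \subseteq V(G)$, $N[D]$ is the union of closed neighbourhoods of vertices of $D$. For a set $\mathcal{F}$ of graphs, $D$ is $\mathcal{F}$-isolating if $G - N[D]$ contains no subgraph isomorphic to a member of $\mathcal{F}$, and $\iota(G,\mathcal{F})$ is the minimum size of such a set. Let $\mathcal{G}$ be the set of connected graphs $G$ with $V(G) = [n]$ for some $n \geq 1$. For real $\alpha > 0$, $\mathcal{G}(\mathcal{F},\alpha) = \{G \in \mathcal{G} : \iota(G,\mathcal{F}) \le \lfloor \alpha|V(G)| \rfloor\}$, $\mathcal{G}(\mathcal{F},\alpha)^* = \{G \in \mathcal{G}(\mathcal{F},\alpha) : \iota(G,\mathcal{F}) = \lfloor \alpha |V(G)|\rfloor\}$, and $\mathcal{G}[\mathcal{F},\alpha] = \mathcal{G} \setminus \mathcal{G}(\mathcal{F},\alpha)$. The number $c(\mathcal{F})$, when it exists, is a rational number such that $\mathcal{G}[\mathcal{F},c(\mathcal{F})]$ is finite and $\mathcal{G}(\mathcal{F},c(\mathcal{F}))^*$ is infinite. $K_{1,k}$ is the star with $k$ leaves. *)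

theory Defs
  imports Complex_Main
begin

type_synonym graph = "nat set \<times> nat set set"

definition simple_graph :: "graph \<Rightarrow> bool" where
  "simple_graph G \<longleftrightarrow> finite (fst G) \<and>
     (\<forall>e\<in>snd G. \<exists>u v. u \<in> fst G \<and> v \<in> fst G \<and> u \<noteq> v \<and> e = {u, v})"

definition connected_graph :: "graph \<Rightarrow> bool" where
  "connected_graph G \<longleftrightarrow>
     (\<forall>u\<in>fst G. \<forall>v\<in>fst G. (\<lambda>x y. {x, y} \<in> snd G)\<^sup>*\<^sup>* u v)"

definition closed_nbhd :: "graph \<Rightarrow> nat set \<Rightarrow> nat set" where
  "closed_nbhd G D = D \<union> {v \<in> fst G. \<exists>u\<in>D. {u, v} \<in> snd G}"

definition delete_vertices :: "graph \<Rightarrow> nat set \<Rightarrow> graph" where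
  "delete_vertices G X = (fst G - X, {e \<in> snd G. e \<inter> X = {}})"

definition has_subgraph_iso :: "graph \<Rightarrow> graph \<Rightarrow> bool" where
  "has_subgraph_iso G H \<longleftrightarrow>
     (\<exists>f. inj_on f (fst H) \<and> f ` fst H \<subseteq> fst G \<and> (\<forall>e\<in>snd H. f ` e \<in> snd G))"

definition isolating :: "graph \<Rightarrow> graph set \<Rightarrow> nat set \<Rightarrow> bool" where
  "isolating G \<F> D \<longleftrightarrow> D \<subseteq> fst G \<and>
     (\<forall>F\<in>\<F>. \<not> has_subgraph_iso (delete_vertices G (closed_nbhd G D)) F)"

definition iota :: "graph \<Rightarrow> graph set \<Rightarrow> nat" where
  "iota G \<F> = Min {card D | D. isolating G \<F> D}"

definition GG :: "graph set" where
  "GG = {G. simple_graph G \<and> connected_graph G \<and> (\<exists>n\<ge>1. fst G = {1..n})}"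

definition G_le :: "graph set \<Rightarrow> real \<Rightarrow> graph set" where
  "G_le \<F> \<alpha> = {G \<in> GG. int (iota G \<F>) \<le> \<lfloor>\<alpha> * real (card (fst G))\<rfloor>}"

definition G_star :: "graph set \<Rightarrow> real \<Rightarrow> graph set" where
  "G_star \<F> \<alpha> = {G \<in> G_le \<F> \<alpha>. int (iota G \<F>) = \<lfloor>\<alpha> * real (card (fst G))\<rfloor>}"

definition G_gt :: "graph set \<Rightarrow> real \<Rightarrow> graph set" where
  "G_gt \<F> \<alpha> = GG - G_le \<F> \<alpha>"

definition star :: "nat \<Rightarrow> graph" where
  "star k = ({0..k}, {{0, i} | i. i \<in> {1..k}})"

end

theory Submission
  imports Defs
begin

text \<open>
  Attach m disjoint copies of a gadget on 2k+3 vertices to a hub vertex; the gadget is a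
  crown graph (K_{k+1,k+1} minus a perfect matching) plus a connector vertex joined to the
  hub and to one crown vertex. For every vertex s of a gadget, the gadget contains a K_{1,k}
  avoiding the connector and the closed neighbourhood of s; since vertices outside a gadget
  dominate at most its connector, every K_{1,k}-isolating set meets each gadget twice. This gives graphs of order
  1 + m(2k+3) with isolation number at least 2m, and if c < 2/(2k+3) all but finitely many
  of them lie outside the class defined by c.
\<close>

lemma doubleton_mem_edges_iff:
  assumes "symp R"
  shows "{x, y} \<in> {{a, b} | a b. R a b} \<longleftrightarrow> R x y"
  using assms by (auto simp: doubleton_eq_iff dest: sympD)

lemma connected_graphI_hub:
  assumes "\<And>v. v \<in> fst G \<Longrightarrow> (\<lambda>x y. {x, y} \<in> snd G)\<^sup>*\<^sup>* v h"
  shows "connected_graph G"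
  unfolding connected_graph_def
proof (intro ballI)
  let ?R = "\<lambda>x y. {x, y} \<in> snd G"
  fix u v assume "u \<in> fst G" "v \<in> fst G"
  have "symp ?R"
    by (rule sympI) (simp add: insert_commute)
  then have "symp ?R\<^sup>*\<^sup>*"
    by (rule symp_rtranclp)
  then have "?R\<^sup>*\<^sup>* h v"
    using assms[OF \<open>v \<in> fst G\<close>] by (rule sympD)
  with assms[OF \<open>u \<in> fst G\<close>] show "?R\<^sup>*\<^sup>* u v"
    by (rule rtranclp_trans)
qed

lemma has_subgraph_iso_starI:
  assumes "z \<in> fst H" "L \<subseteq> fst H" "z \<notin> L" "finite L" "card L = k"
    and "\<And>l. l \<in> L \<Longrightarrow> {z, l} \<in> snd H"
  shows "has_subgraph_iso H (star k)"
proof -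
  obtain h where h: "bij_betw h {1..k} L"
    using ex_bij_betw_nat_finite_1[OF \<open>finite L\<close>] \<open>card L = k\<close> by auto
  define f where "f j = (if j = 0 then z else h j)" for j
  have star_vertices: "fst (star k) = insert 0 {1..k}"
    by (auto simp: star_def)
  have f_h: "f j = h j" if "j \<in> {1..k}" for j
    using that by (simp add: f_def)
  have "bij_betw f {1..k} L"
    using h by (rule bij_betw_cong[THEN iffD2, rotated]) (rule f_h)
  then have leaves: "f ` {1..k} = L" and "inj_on f {1..k}"
    by (simp_all add: bij_betw_def)
  moreover have "f 0 = z"
    by (simp add: f_def)
  ultimately have "inj_on f (fst (star k))" and image: "f ` fst (star k) = insert z L"
    using leaves \<open>z \<notin> L\<close> by (simp_all add: star_vertices)
  moreover have "f ` fst (star k) \<subseteq> fst H"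
    using image assms(1,2) by simp
  moreover have "f ` e \<in> snd H" if e: "e \<in> snd (star k)" for e
  proof -
    obtain j where j: "j \<in> {1..k}" "e = {0, j}"
      using e by (auto simp: star_def)
    then have "f ` e = {z, f j}"
      by (simp add: f_def insert_commute)
    then show ?thesis
      using assms(6) leaves j(1) by auto
  qed
  ultimately show ?thesis
    unfolding has_subgraph_iso_def by blast
qed

lemma isolating_vertex_set:
  assumes "\<And>F. F \<in> \<F> \<Longrightarrow> fst F \<noteq> {}"
  shows "isolating G \<F> (fst G)"
proof -
  have "fst (delete_vertices G (closed_nbhd G (fst G))) = {}"
    by (auto simp: delete_vertices_def closed_nbhd_def)
  then show ?thesis
    using assms by (fastforce simp: isolating_def has_subgraph_iso_def)
qed

lemma le_iotaI:
  assumes "finite (fst G)" "isolating G \<F> D\<^sub>0"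
    and "\<And>D. isolating G \<F> D \<Longrightarrow> b \<le> card D"
  shows "b \<le> iota G \<F>"
proof -
  let ?S = "{card D | D. isolating G \<F> D}"
  have "?S \<subseteq> card ` Pow (fst G)"
    by (auto simp: isolating_def)
  moreover have "finite (card ` Pow (fst G))"
    using assms(1) by simp
  ultimately have "finite ?S"
    by (rule finite_subset)
  moreover have "?S \<noteq> {}"
    using assms(2) by blast
  ultimately have "iota G \<F> \<in> ?S"
    unfolding iota_def by (rule Min_in)
  then show ?thesis
    using assms(3) by auto
qed

lemma card_ge_if_meets_disjoint_family:
  assumes "finite D" "finite I"
    and "\<And>i j. i \<in> I \<Longrightarrow> j \<in> I \<Longrightarrow> i \<noteq> j \<Longrightarrow> B i \<inter> B j = {}"
    and "\<And>i. i \<in> I \<Longrightarrow> r \<le> card (D \<inter> B i)"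
  shows "r * card I \<le> card D"
proof -
  have "r * card I = (\<Sum>i\<in>I. r)"
    by simp
  also have "\<dots> \<le> (\<Sum>i\<in>I. card (D \<inter> B i))"
    using assms(4) by (rule sum_mono)
  also have "\<dots> = card (\<Union>i\<in>I. D \<inter> B i)"
    using assms(1-3) by (intro card_UN_disjoint[symmetric]) auto
  also have "\<dots> \<le> card D"
    using assms(1) by (intro card_mono) auto
  finally show ?thesis .
qed

lemma eventually_add_mult_less_mult:
  fixes a b c :: real
  assumes "a < b"
  shows "eventually (\<lambda>m. c + a * real m < b * real m) sequentially"
proof -
  obtain N :: nat where N: "c / (b - a) < real N"
    using reals_Archimedean2 by blast
  show ?thesis
  proof (rule eventually_sequentiallyI)
    fix m assume "N \<le> m"
    have "c < (b - a) * real N"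
      using N assms by (simp add: pos_divide_less_eq mult.commute)
    also have "\<dots> \<le> (b - a) * real m"
      using \<open>N \<le> m\<close> assms by (intro mult_left_mono) auto
    finally show "c + a * real m < b * real m"
      by (simp add: algebra_simps)
  qed
qed

lemma infinite_G_gt:
  assumes "inj H" "\<And>m. H m \<in> GG"
    and "eventually (\<lambda>m. \<alpha> * real (card (fst (H m))) < real (iota (H m) \<F>)) sequentially"
  shows "infinite (G_gt \<F> \<alpha>)"
proof
  assume fin: "finite (G_gt \<F> \<alpha>)"
  obtain N where N: "\<And>m. N \<le> m \<Longrightarrow> \<alpha> * real (card (fst (H m))) < real (iota (H m) \<F>)"
    using assms(3) by (auto simp: eventually_sequentially)
  have "H m \<in> G_gt \<F> \<alpha>" if "N \<le> m" for m
  proof -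
    have "real_of_int \<lfloor>\<alpha> * real (card (fst (H m)))\<rfloor> < real (iota (H m) \<F>)"
      using N[OF that] of_int_floor_le by (rule le_less_trans[rotated])
    then show ?thesis
      using assms(2) by (auto simp: G_gt_def G_le_def)
  qed
  then have "H ` {N..} \<subseteq> G_gt \<F> \<alpha>"
    by auto
  moreover have "infinite (H ` {N..})"
    using finite_imageD inj_on_subset[OF assms(1) subset_UNIV] infinite_Ici by blast
  ultimately show False
    using fin finite_subset by blast
qed

text \<open>
  Local vertex 0 is the connector; 1..k+1 and k+2..2k+2 are the two sides of the crown
  graph, with t matched to t+k+1; the extra edge is 0--1.
\<close>
definition gadget_adj :: "nat \<Rightarrow> nat \<Rightarrow> nat \<Rightarrow> bool" where
  "gadget_adj k s t \<longleftrightarrow> {s, t} = {0, 1} \<or>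
     (1 \<le> s \<and> s \<le> k+1 \<and> k+2 \<le> t \<and> t \<le> 2*k+2 \<and> t \<noteq> s+k+1) \<or>
     (1 \<le> t \<and> t \<le> k+1 \<and> k+2 \<le> s \<and> s \<le> 2*k+2 \<and> s \<noteq> t+k+1)"

lemma symp_gadget_adj: "symp (gadget_adj k)"
proof (rule sympI)
  fix s t :: nat
  have "{t, s} = {s, t}"
    by (rule insert_commute)
  moreover assume "gadget_adj k s t"
  ultimately show "gadget_adj k t s"
    unfolding gadget_adj_def by argo
qed

lemma gadget_adj_less: "gadget_adj k s t \<Longrightarrow> s < 2*k+3 \<and> t < 2*k+3 \<and> s \<noteq> t"
  unfolding gadget_adj_def doubleton_eq_iff by linarith

lemma gadget_adj_connected:
  assumes "k \<ge> 2" "t < 2*k+3"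
  shows "(gadget_adj k)\<^sup>*\<^sup>* t 0"
proof -
  let ?R = "gadget_adj k"
  have one: "?R\<^sup>*\<^sup>* 1 0"
    by (rule r_into_rtranclp) (simp add: gadget_adj_def insert_commute)
  have right: "?R\<^sup>*\<^sup>* b 0" if "k+3 \<le> b" "b \<le> 2*k+2" for b
    by (rule converse_rtranclp_into_rtranclp[OF _ one])
      (use that in \<open>simp add: gadget_adj_def\<close>)
  have left: "?R\<^sup>*\<^sup>* a 0" if "3 \<le> a" "a \<le> k+1" for a
    by (rule converse_rtranclp_into_rtranclp[OF _ right[of "k+3"]])
      (use that in \<open>simp_all add: gadget_adj_def\<close>)
  have k2: "?R\<^sup>*\<^sup>* (k+2) 0"
    by (rule converse_rtranclp_into_rtranclp[OF _ left[of 3]])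
      (use assms(1) in \<open>simp_all add: gadget_adj_def\<close>)
  have two: "?R\<^sup>*\<^sup>* 2 0"
    by (rule converse_rtranclp_into_rtranclp[OF _ k2])
      (use assms(1) in \<open>simp add: gadget_adj_def\<close>)
  consider "t = 0" | "t = 1" | "t = 2" | "3 \<le> t" "t \<le> k+1" | "t = k+2" | "k+3 \<le> t" "t \<le> 2*k+2"
    using assms(2) by linarith
  then show ?thesis
    by cases (use one two left k2 right in simp_all)
qed

lemma gadget_star_avoiding:
  assumes "s < 2*k+3"
  obtains z L where "z \<in> {1..2*k+2}" "L \<subseteq> {1..2*k+2}" "z \<notin> L" "card L = k"
    and "\<And>l. l \<in> L \<Longrightarrow> gadget_adj k z l"
    and "\<And>t. t \<in> insert z L \<Longrightarrow> t \<noteq> s \<and> \<not> gadget_adj k s t"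
proof -
  consider "s = 0" | "1 \<le> s" "s \<le> k+1" | "k+2 \<le> s" "s \<le> 2*k+2"
    using assms by linarith
  then show ?thesis
  proof cases
    case 1
    show ?thesis
      by (rule that[of "k+2" "{2..k+1}"])
        (use 1 in \<open>auto simp: gadget_adj_def doubleton_eq_iff\<close>)
  next
    case 2
    show ?thesis
      by (rule that[of "s+k+1" "{1..k+1} - {s}"])
        (use 2 in \<open>auto simp: gadget_adj_def doubleton_eq_iff card_Diff_singleton\<close>)
  next
    case 3
    show ?thesis
      by (rule that[of "s-(k+1)" "{k+2..2*k+2} - {s}"])
        (use 3 in \<open>auto simp: gadget_adj_def doubleton_eq_iff card_Diff_singleton\<close>)
  qed
qed

definition gadget_vertex :: "nat \<Rightarrow> nat \<Rightarrow> nat \<Rightarrow> nat" where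
  "gadget_vertex k i t = 2 + i * (2*k+3) + t"

definition gadget :: "nat \<Rightarrow> nat \<Rightarrow> nat set" where
  "gadget k i = gadget_vertex k i ` {..<2*k+3}"

text \<open>Vertex 1 is the hub.\<close>
definition gadget_graph_adj :: "nat \<Rightarrow> nat \<Rightarrow> nat \<Rightarrow> nat \<Rightarrow> bool" where
  "gadget_graph_adj k m x y \<longleftrightarrow> (\<exists>i<m. {x, y} = {1, gadget_vertex k i 0} \<or>
     (\<exists>s t. gadget_adj k s t \<and> x = gadget_vertex k i s \<and> y = gadget_vertex k i t))"

definition gadget_graph :: "nat \<Rightarrow> nat \<Rightarrow> graph" where
  "gadget_graph k m = ({1..1 + m * (2*k+3)}, {{x, y} | x y. gadget_graph_adj k m x y})"

lemma gadget_vertex_eq_iff: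
  assumes "s < 2*k+3" "t < 2*k+3"
  shows "gadget_vertex k i s = gadget_vertex k j t \<longleftrightarrow> i = j \<and> s = t"
proof
  assume "gadget_vertex k i s = gadget_vertex k j t"
  then have eq: "s + i * (2*k+3) = t + j * (2*k+3)"
    by (simp add: gadget_vertex_def)
  have "i = (s + i * (2*k+3)) div (2*k+3)" "j = (t + j * (2*k+3)) div (2*k+3)"
    using assms by simp_all
  then have "i = j"
    using eq by simp
  then show "i = j \<and> s = t"
    using eq by simp
qed simp

lemma gadget_vertex_ne_hub: "gadget_vertex k i t \<noteq> 1"
  by (simp add: gadget_vertex_def)

lemma disjoint_gadgets: "i \<noteq> j \<Longrightarrow> gadget k i \<inter> gadget k j = {}"
  by (auto simp: gadget_def gadget_vertex_eq_iff)

lemma gadget_vertex_in_graph: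
  assumes "i < m" "t < 2*k+3"
  shows "gadget_vertex k i t \<in> fst (gadget_graph k m)"
proof -
  have "(i + 1) * (2*k+3) \<le> m * (2*k+3)"
    using assms(1) by (intro mult_le_mono1) simp
  then show ?thesis
    using assms(2) by (simp add: gadget_graph_def gadget_vertex_def)
qed

lemma gadget_graph_vertex_cases:
  assumes "x \<in> fst (gadget_graph k m)"
  shows "x = 1 \<or> (\<exists>i<m. \<exists>t<2*k+3. x = gadget_vertex k i t)"
proof (cases "x = 1")
  case False
  then have x: "2 \<le> x" "x - 2 < m * (2*k+3)"
    using assms by (auto simp: gadget_graph_def)
  define i where "i = (x - 2) div (2*k+3)"
  define t where "t = (x - 2) mod (2*k+3)"
  have "x = gadget_vertex k i t"
    using x(1) div_mult_mod_eq[of "x - 2" "2*k+3"] unfolding gadget_vertex_def i_def t_def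
    by linarith
  moreover have "i < m"
    using x(2) unfolding i_def by (rule less_mult_imp_div_less)
  moreover have "t < 2*k+3"
    by (simp add: t_def)
  ultimately show ?thesis
    by blast
qed simp

lemma symp_gadget_graph_adj: "symp (gadget_graph_adj k m)"
proof (rule sympI)
  fix x y assume "gadget_graph_adj k m x y"
  then show "gadget_graph_adj k m y x"
    using symp_gadget_adj[of k] unfolding gadget_graph_adj_def by (metis insert_commute sympD)
qed

lemma gadget_graph_edge_iff: "{x, y} \<in> snd (gadget_graph k m) \<longleftrightarrow> gadget_graph_adj k m x y"
  unfolding gadget_graph_def snd_conv by (rule doubleton_mem_edges_iff[OF symp_gadget_graph_adj])

lemma gadget_graph_adj_vertices:
  assumes "gadget_graph_adj k m x y"
  shows "x \<in> fst (gadget_graph k m) \<and> y \<in> fst (gadget_graph k m) \<and> x \<noteq> y"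
proof -
  obtain i where i: "i < m" and
    "{x, y} = {1, gadget_vertex k i 0} \<or>
     (\<exists>s t. gadget_adj k s t \<and> x = gadget_vertex k i s \<and> y = gadget_vertex k i t)"
    using assms by (auto simp: gadget_graph_adj_def)
  then show ?thesis
  proof (elim disjE exE conjE)
    assume "{x, y} = {1, gadget_vertex k i 0}"
    moreover have "1 \<in> fst (gadget_graph k m)"
      by (simp add: gadget_graph_def)
    ultimately show ?thesis
      using gadget_vertex_in_graph[OF i, of 0 k] gadget_vertex_ne_hub[of k i 0]
      by (auto simp: doubleton_eq_iff)
  next
    fix s t assume st: "gadget_adj k s t" "x = gadget_vertex k i s" "y = gadget_vertex k i t"
    then have "s < 2*k+3" "t < 2*k+3" "s \<noteq> t"
      using gadget_adj_less by blast+
    then show ?thesis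
      using st(2,3) by (simp add: gadget_vertex_in_graph[OF i] gadget_vertex_eq_iff)
  qed
qed

lemma gadget_graph_neighbour:
  assumes "{u, gadget_vertex k i t} \<in> snd (gadget_graph k m)" "t < 2*k+3" "t \<noteq> 0"
  shows "\<exists>s<2*k+3. u = gadget_vertex k i s \<and> gadget_adj k s t"
proof -
  obtain j where "j < m" and
    "{u, gadget_vertex k i t} = {1, gadget_vertex k j 0} \<or>
     (\<exists>s t'. gadget_adj k s t' \<and> u = gadget_vertex k j s \<and>
        gadget_vertex k i t = gadget_vertex k j t')"
    using assms(1) by (auto simp: gadget_graph_edge_iff gadget_graph_adj_def)
  then show ?thesis
  proof (elim disjE exE conjE)
    assume "{u, gadget_vertex k i t} = {1, gadget_vertex k j 0}"
    then have "gadget_vertex k i t = gadget_vertex k j 0"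
      by (metis doubleton_eq_iff gadget_vertex_ne_hub)
    then show ?thesis
      using assms(2,3) by (simp add: gadget_vertex_eq_iff)
  next
    fix s t' assume st: "gadget_adj k s t'" "u = gadget_vertex k j s"
      "gadget_vertex k i t = gadget_vertex k j t'"
    then have "s < 2*k+3" "t' < 2*k+3"
      using gadget_adj_less by blast+
    then show ?thesis
      using st assms(2) by (auto simp: gadget_vertex_eq_iff)
  qed
qed

lemma gadget_graph_edgeI:
  assumes "i < m" "gadget_adj k s t"
  shows "{gadget_vertex k i s, gadget_vertex k i t} \<in> snd (gadget_graph k m)"
  using assms by (auto simp: gadget_graph_edge_iff gadget_graph_adj_def)

lemma gadget_vertex_reaches_hub:
  assumes "k \<ge> 2" "i < m" "t < 2*k+3"
  shows "(\<lambda>x y. {x, y} \<in> snd (gadget_graph k m))\<^sup>*\<^sup>* (gadget_vertex k i t) 1"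
proof -
  let ?R = "\<lambda>x y. {x, y} \<in> snd (gadget_graph k m)"
  have "?R\<^sup>*\<^sup>* (gadget_vertex k i s) (gadget_vertex k i 0)" if "(gadget_adj k)\<^sup>*\<^sup>* s 0" for s
    using that
  proof (induction rule: rtranclp_induct)
    case (step a b)
    then show ?case
      using gadget_graph_edgeI[OF assms(2)] by (simp add: rtranclp.rtrancl_into_rtrancl)
  qed simp
  moreover have "?R (gadget_vertex k i 0) 1"
    using assms(2) by (auto simp: gadget_graph_edge_iff gadget_graph_adj_def)
  ultimately show ?thesis
    using gadget_adj_connected[OF assms(1,3)] by (auto intro: rtranclp.rtrancl_into_rtrancl)
qed

lemma gadget_graph_in_GG:
  assumes "k \<ge> 2"
  shows "gadget_graph k m \<in> GG"
proof -
  have "simple_graph (gadget_graph k m)"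
    using gadget_graph_adj_vertices by (fastforce simp: simple_graph_def gadget_graph_def)
  moreover have "connected_graph (gadget_graph k m)"
    using gadget_graph_vertex_cases gadget_vertex_reaches_hub[OF assms]
    by (intro connected_graphI_hub) blast
  ultimately show ?thesis
    by (auto simp: GG_def gadget_graph_def)
qed

lemma card_gadget_graph: "card (fst (gadget_graph k m)) = 1 + m * (2*k+3)"
  by (simp add: gadget_graph_def)

lemma inj_gadget_graph: "inj (gadget_graph k)"
  by (rule injI) (simp add: gadget_graph_def)

lemma gadget_graph_has_star:
  assumes "i < m" "s < 2*k+3" "D \<inter> gadget k i \<subseteq> {gadget_vertex k i s}"
  shows "has_subgraph_iso (delete_vertices (gadget_graph k m) (closed_nbhd (gadget_graph k m) D))
           (star k)"
proof -
  let ?G = "gadget_graph k m"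
  let ?X = "closed_nbhd ?G D"
  let ?v = "gadget_vertex k i"
  obtain z L where z: "z \<in> {1..2*k+2}" and L: "L \<subseteq> {1..2*k+2}" "z \<notin> L" "card L = k"
    and star: "\<And>l. l \<in> L \<Longrightarrow> gadget_adj k z l"
    and avoid: "\<And>t. t \<in> insert z L \<Longrightarrow> t \<noteq> s \<and> \<not> gadget_adj k s t"
    using gadget_star_avoiding[OF assms(2)] by blast
  have inj: "inj_on ?v {..<2*k+3}"
    by (rule inj_onI) (simp add: gadget_vertex_eq_iff)
  have outside: "?v t \<in> fst ?G - ?X" if "t \<in> insert z L" for t
  proof -
    have t: "t < 2*k+3" "t \<noteq> 0"
      using that z L(1) by auto
    have "?v t \<notin> D"
      using assms(3) avoid[OF that] t(1) assms(2) by (auto simp: gadget_def gadget_vertex_eq_iff)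
    moreover have "{u, ?v t} \<notin> snd ?G" if "u \<in> D" for u
    proof
      assume "{u, ?v t} \<in> snd ?G"
      then obtain s' where "s' < 2*k+3" "u = ?v s'" "gadget_adj k s' t"
        using gadget_graph_neighbour t by blast
      with \<open>u \<in> D\<close> assms(3) avoid[OF \<open>t \<in> insert z L\<close>] show False
        using assms(2) by (auto simp: gadget_def gadget_vertex_eq_iff)
    qed
    ultimately show ?thesis
      using gadget_vertex_in_graph[OF assms(1) t(1)] by (auto simp: closed_nbhd_def)
  qed
  show ?thesis
  proof (rule has_subgraph_iso_starI[where L = "?v ` L"])
    show "?v z \<in> fst (delete_vertices ?G ?X)" "?v ` L \<subseteq> fst (delete_vertices ?G ?X)"
      using outside by (auto simp: delete_vertices_def)
    show "?v z \<notin> ?v ` L"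
      using L z by (auto simp: gadget_vertex_eq_iff)
    have "L \<subseteq> {..<2*k+3}"
      using L(1) by auto
    then show "card (?v ` L) = k"
      using L(3) by (simp add: card_image[OF inj_on_subset[OF inj]])
    show "finite (?v ` L)"
      using L(1) finite_subset by blast
    show "{?v z, l} \<in> snd (delete_vertices ?G ?X)" if l: "l \<in> ?v ` L" for l
    proof -
      obtain t where t: "t \<in> L" "l = ?v t"
        using l by blast
      then show ?thesis
        using gadget_graph_edgeI[OF assms(1) star[OF t(1)]] outside[of z] outside[of t]
        by (auto simp: delete_vertices_def)
    qed
  qed
qed

lemma isolating_meets_gadget_twice:
  assumes "isolating (gadget_graph k m) {star k} D" "i < m"
  shows "2 \<le> card (D \<inter> gadget k i)"
proof (rule ccontr)
  assume "\<not> 2 \<le> card (D \<inter> gadget k i)"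
  moreover have "finite (D \<inter> gadget k i)"
    by (simp add: gadget_def)
  ultimately have "\<forall>a\<in>D \<inter> gadget k i. \<forall>b\<in>D \<inter> gadget k i. a = b"
    by (simp add: card_le_Suc0_iff_eq[symmetric])
  then obtain s where "s < 2*k+3" "D \<inter> gadget k i \<subseteq> {gadget_vertex k i s}"
  proof (cases "D \<inter> gadget k i = {}")
    case False
    then obtain a where a: "a \<in> D \<inter> gadget k i"
      by blast
    then obtain s where "s < 2*k+3" "a = gadget_vertex k i s"
      by (auto simp: gadget_def)
    with a \<open>\<forall>a\<in>D \<inter> gadget k i. \<forall>b\<in>D \<inter> gadget k i. a = b\<close> show ?thesis
      using that by blast
  qed (use that[of 0] in simp)
  then show False
    using gadget_graph_has_star[OF assms(2)] assms(1) by (auto simp: isolating_def)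
qed

lemma iota_gadget_graph_ge: "2 * m \<le> iota (gadget_graph k m) {star k}"
proof (rule le_iotaI)
  show "finite (fst (gadget_graph k m))"
    by (simp add: gadget_graph_def)
  show "isolating (gadget_graph k m) {star k} (fst (gadget_graph k m))"
    by (rule isolating_vertex_set) (auto simp: star_def)
next
  fix D assume D: "isolating (gadget_graph k m) {star k} D"
  then have "finite D"
    by (auto simp: isolating_def gadget_graph_def intro: finite_subset)
  have "2 * card {..<m} \<le> card D"
    using \<open>finite D\<close> by (rule card_ge_if_meets_disjoint_family[where B = "gadget k"])
      (auto simp: disjoint_gadgets isolating_meets_gadget_twice[OF D])
  then show "2 * m \<le> card D"
    by simp
qed

theorem proposition1:
  fixes k :: nat and c :: rat
  assumes "k \<ge> 2"
    and "c > 0"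
    and "finite (G_gt {star k} (real_of_rat c))"
    and "infinite (G_star {star k} (real_of_rat c))"
  shows "c \<ge> 2 / (2 * of_nat k + 3)"
proof (rule ccontr)
  let ?\<alpha> = "real_of_rat c"
  assume "\<not> ?thesis"
  then have "?\<alpha> < 2 / (2 * real k + 3)"
    by (metis (mono_tags) linorder_not_le of_rat_less of_rat_divide of_rat_add of_rat_mult
        of_rat_numeral_eq of_rat_of_nat_eq)
  then have "?\<alpha> * (2 * real k + 3) < 2"
    by (simp add: pos_less_divide_eq)
  then have "eventually (\<lambda>m. ?\<alpha> + ?\<alpha> * (2 * real k + 3) * real m < 2 * real m) sequentially"
    by (rule eventually_add_mult_less_mult)
  then have "eventually (\<lambda>m. ?\<alpha> * real (card (fst (gadget_graph k m)))
      < real (iota (gadget_graph k m) {star k})) sequentially"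
  proof (rule eventually_mono)
    fix m assume "?\<alpha> + ?\<alpha> * (2 * real k + 3) * real m < 2 * real m"
    then show "?\<alpha> * real (card (fst (gadget_graph k m))) < real (iota (gadget_graph k m) {star k})"
      using iota_gadget_graph_ge[of m k] by (simp add: card_gadget_graph algebra_simps)
  qed
  then have "infinite (G_gt {star k} ?\<alpha>)"
    by (rule infinite_G_gt[OF inj_gadget_graph gadget_graph_in_GG[OF assms(1)]])
  with assms(3) show False
    by contradiction
qed

end
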